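(* Let $p,q$ be positive integers, with notation as in the context. Let $T_c$ be a positive integer with $T_c=2^{l_c}T_1$ for a non-negative integer $l_c$ (or $T_c=1$), and let $s$ be the integer with $T_{e_s}=2^sT_1$. Suppose the positive integer $e$ satisfies $$e\ge\begin{cases}\max(e_p,e_q) & \text{if } T_c=1;\\ e_{s,g}+1 & \text{if } l_c=0,\ T_1\ne 1;\\ e_{s,g}+2l_c-1 & \text{if } 1\le l_c\le s+1;\\ e_{s,g}+s+1+l_c & \text{if } l_c\ge s+2.\end{cases}$$ Then $N_{T_c,e}=N_{T_c,e+l}$ for every positive integer $l$.
   Context: Let $\mathbf{C}=\begin{bmatrix}1 & p\\ q & 1+pq\end{bmatrix}$. The Cat map over $\mathbb{Z}_{2^e}$ is the bijection $v\mapsto \mathbf{C}v\bmod 2^e$ of $\mathbb{Z}_{2^e}^2$; a cycle of length $n$ is an orbit of a point $v$ for which $n$ is the least positive integer with $\mathbf{C}^n v\equiv v\pmod{2^e}$. $N_{T_c,e}$ denotes the number of cycles of length $T_c$ of the Cat map over $\mathbb{Z}_{2^e}$, and $T_e$ its least period (least $n\ge1$ with $\mathbf{C}^n\equiv I\pmod{2^e}$). Put $A=pq+2$, $B=\sqrt{A^2-4}$, $G_n=\left(\frac{A+B}{2}\right)^n+\left(\frac{A-B}{2}\right)^n$, $H_n=\frac{1}{B}\left(\left(\frac{A+B}{2}\right)^n-\left(\frac{A-B}{2}\right)^n\right)$ (integers). For a nonzero integer $m$ let $v_2(m)$ be the largest $x$ with $2^x\mid m$. Let $e_p=v_2(p)$,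 $e_q=v_2(q)$; $T_1=3$ if $p,q$ are both odd, $T_1=2$ if exactly one of $p,q$ is odd, $T_1=1$ if both are even; $\hat h=-1$ if $e_p+e_q=0$ and $\hat h=\min(e_p,e_q)$ otherwise; $e_{s,h}=v_2(H_{T_1})$; $m_0=1$ if $\frac12 G_{T_1}\not\equiv 1\pmod 4$ and $m_0=0$ otherwise; $e_{s,g}=v_2\left(\frac12 G_{2^{m_0}T_1}-1\right)$; $x_0=e_{s,h}+m_0+\hat h-e_{s,g}$ if $e_{s,g}<e_{s,h}+m_0+\hat h$ and $x_0=0$ otherwise; and $e_s=e_{s,h}+m_0+\hat h+x_0$. The cases in the displayed condition are read in order (the first applicable one is used). *)

theory Defs
  imports "HOL-Analysis.Analysis" "HOL-Computational_Algebra.Factorial_Ring" "HOL-Number_Theory.Cong"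
begin

definition cat_C :: "int \<Rightarrow> int \<Rightarrow> int^2^2" where
  "cat_C p q = vector [vector [1, p], vector [q, 1 + p * q]]"

definition cat_pow :: "int \<Rightarrow> int \<Rightarrow> nat \<Rightarrow> int^2^2" where
  "cat_pow p q n = ((\<lambda>M. cat_C p q ** M) ^^ n) (mat 1)"

definition vcong :: "int \<Rightarrow> int^2 \<Rightarrow> int^2 \<Rightarrow> bool" where
  "vcong m u v \<longleftrightarrow> (\<forall>i. [u $ i = v $ i] (mod m))"

text \<open>The state space Z_{2^e}^2, represented by canonical residues.\<close>
definition cat_points :: "nat \<Rightarrow> (int^2) set" where
  "cat_points e = {v. \<forall>i. 0 \<le> v $ i \<and> v $ i < 2 ^ e}"

definition cat_map :: "int \<Rightarrow> int \<Rightarrow> nat \<Rightarrow> int^2 \<Rightarrow> int^2" where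
  "cat_map p q e v = (\<chi> i. (cat_C p q *v v) $ i mod 2 ^ e)"

definition point_period :: "int \<Rightarrow> int \<Rightarrow> nat \<Rightarrow> int^2 \<Rightarrow> nat" where
  "point_period p q e v = (LEAST n. n \<ge> 1 \<and> vcong (2 ^ e) (cat_pow p q n *v v) v)"

definition cat_orbit :: "int \<Rightarrow> int \<Rightarrow> nat \<Rightarrow> int^2 \<Rightarrow> (int^2) set" where
  "cat_orbit p q e v = {(cat_map p q e ^^ k) v | k. True}"

definition N_cyc :: "int \<Rightarrow> int \<Rightarrow> nat \<Rightarrow> nat \<Rightarrow> nat" where
  "N_cyc p q T e = card {cat_orbit p q e v | v. v \<in> cat_points e \<and> point_period p q e v = T}"

definition T_per :: "int \<Rightarrow> int \<Rightarrow> nat \<Rightarrow> nat" where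
  "T_per p q e = (LEAST n. n \<ge> 1 \<and> (\<forall>i j. [cat_pow p q n $ i $ j = mat 1 $ i $ j] (mod 2 ^ e)))"

text \<open>A = pq+2, B = sqrt(A^2-4), G_n and H_n (real closed forms; they are integers).\<close>
definition cat_A :: "int \<Rightarrow> int \<Rightarrow> int" where
  "cat_A p q = p * q + 2"

definition cat_B :: "int \<Rightarrow> int \<Rightarrow> real" where
  "cat_B p q = sqrt (real_of_int (cat_A p q) ^ 2 - 4)"

definition G_real :: "int \<Rightarrow> int \<Rightarrow> nat \<Rightarrow> real" where
  "G_real p q n = ((real_of_int (cat_A p q) + cat_B p q) / 2) ^ n
                 + ((real_of_int (cat_A p q) - cat_B p q) / 2) ^ n"

definition H_real :: "int \<Rightarrow> int \<Rightarrow> nat \<Rightarrow> real" where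
  "H_real p q n = (1 / cat_B p q) * (((real_of_int (cat_A p q) + cat_B p q) / 2) ^ n
                 - ((real_of_int (cat_A p q) - cat_B p q) / 2) ^ n)"

definition G_int :: "int \<Rightarrow> int \<Rightarrow> nat \<Rightarrow> int" where
  "G_int p q n = (THE z. real_of_int z = G_real p q n)"

definition H_int :: "int \<Rightarrow> int \<Rightarrow> nat \<Rightarrow> int" where
  "H_int p q n = (THE z. real_of_int z = H_real p q n)"

definition v2 :: "int \<Rightarrow> nat" where
  "v2 m = multiplicity (2::int) m"

definition T1 :: "int \<Rightarrow> int \<Rightarrow> nat" where
  "T1 p q = (if odd p \<and> odd q then 3 else if odd p \<or> odd q then 2 else 1)"

definition hhat :: "int \<Rightarrow> int \<Rightarrow> int" where
  "hhat p q = (if v2 p + v2 q = 0 then -1 else int (min (v2 p) (v2 q)))"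

definition e_sh :: "int \<Rightarrow> int \<Rightarrow> nat" where
  "e_sh p q = v2 (H_int p q (T1 p q))"

definition m0 :: "int \<Rightarrow> int \<Rightarrow> nat" where
  "m0 p q = (if \<not> [G_int p q (T1 p q) div 2 = 1] (mod 4) then 1 else 0)"

definition e_sg :: "int \<Rightarrow> int \<Rightarrow> nat" where
  "e_sg p q = v2 (G_int p q (2 ^ m0 p q * T1 p q) div 2 - 1)"

definition x0 :: "int \<Rightarrow> int \<Rightarrow> int" where
  "x0 p q = (let t = int (e_sh p q) + int (m0 p q) + hhat p q in
             if int (e_sg p q) < t then t - int (e_sg p q) else 0)"

definition e_s :: "int \<Rightarrow> int \<Rightarrow> int" where
  "e_s p q = int (e_sh p q) + int (m0 p q) + hhat p q + x0 p q"

end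

theory Submission
  imports Defs
begin

(* A point w of period T modulo 2^(e+l) satisfies (C^T - I) w = 0 (mod 2^(e+l)). If the
   matrix C^T - I loses at most J <= e factors of 2 when applied to integer vectors, this forces
   2^l to divide w, so that scaling by 2^l is a bijection from Z_(2^e)^2 onto the points of
   period T modulo 2^(e+l) which preserves periods and orbits; hence N_(T,e+l) = N_(T,e).

   For T = 1 the loss is bounded via det(C - I) = -pq. For T = 2^lc T1 it is at most
   e_sg + lc: C^T1 = I (mod 2), det(C^n - I) = 2 - G_n and det(C^n + I) = 2 + G_n, and
   G_n = 2 (mod 8) for n = 2^i 2^m0 T1, so in C^(2n) - I = (C^n - I)(C^n + I) the second factor
   loses exactly one power of 2. *)

lemma mat2_mult_nth: "((X::'a::semiring_1^2^2) ** Y)$i$j = X$i$1 * Y$1$j + X$i$2 * Y$2$j"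
  by (simp add: matrix_matrix_mult_def sum_2)

lemma mat2_mult_vec_nth: "((X::'a::semiring_1^2^2) *v w)$i = X$i$1 * w$1 + X$i$2 * w$2"
  by (simp add: matrix_vector_mult_def sum_2)

lemma mat2_eq_iff:
  "(X::'a^2^2) = Y \<longleftrightarrow> X$1$1 = Y$1$1 \<and> X$1$2 = Y$1$2 \<and> X$2$1 = Y$2$1 \<and> X$2$2 = Y$2$2"
  by (auto simp: vec_eq_iff forall_2)

lemma mat2_1_nth [simp]:
  "(mat 1 :: 'a::zero_neq_one^2^2)$1$1 = 1" "(mat 1 :: 'a^2^2)$1$2 = 0"
  "(mat 1 :: 'a^2^2)$2$1 = 0" "(mat 1 :: 'a^2^2)$2$2 = 1"
  by (simp_all add: mat_def)

lemma cat_C_nth [simp]: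
  "cat_C p q $1$1 = 1" "cat_C p q $1$2 = p" "cat_C p q $2$1 = q" "cat_C p q $2$2 = 1 + p * q"
  by (simp_all add: cat_C_def)

lemma matrix_vector_mult_smult:
  "(X::'a::comm_semiring_1^'n^'m) *v (c *s v) = c *s (X *v v)"
  by (simp add: vec_eq_iff matrix_vector_mult_def sum_distrib_left mult_ac)

section \<open>Lucas sequences and powers of the Cat matrix\<close>

fun lucas_U :: "int \<Rightarrow> nat \<Rightarrow> int" where
  "lucas_U A 0 = 0"
| "lucas_U A (Suc 0) = 1"
| "lucas_U A (Suc (Suc n)) = A * lucas_U A (Suc n) - lucas_U A n"

fun lucas_V :: "int \<Rightarrow> nat \<Rightarrow> int" where
  "lucas_V A 0 = 2"
| "lucas_V A (Suc 0) = A"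
| "lucas_V A (Suc (Suc n)) = A * lucas_V A (Suc n) - lucas_V A n"

lemma lucas_V_eq_U: "lucas_V A n = 2 * lucas_U A (Suc n) - A * lucas_U A n"
proof (induction A n rule: lucas_V.induct)
  case (3 A n)
  show ?case by (simp add: "3.IH") (simp add: algebra_simps)
qed simp_all

lemma lucas_U_cassini: "lucas_U A (Suc n)^2 - A * lucas_U A (Suc n) * lucas_U A n + lucas_U A n^2 = 1"
  by (induction n) (simp_all add: algebra_simps power2_eq_square)

lemma lucas_V_gt_2:
  assumes "A \<ge> 3" "n \<ge> 1"
  shows "lucas_V A n > 2"
proof -
  have "2 \<le> lucas_V A n \<and> lucas_V A n < lucas_V A (Suc n)" for n
  proof (induction n)
    case (Suc n)
    then have "3 * lucas_V A (Suc n) \<le> A * lucas_V A (Suc n)"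
      using assms(1) by (intro mult_right_mono) auto
    moreover have "lucas_V A (Suc (Suc n)) = A * lucas_V A (Suc n) - lucas_V A n" by simp
    ultimately show ?case using Suc by linarith
  qed (use assms(1) in simp)
  then show ?thesis
    using assms(2) by (metis One_nat_def Suc_le_D order_le_less_trans)
qed

lemma lucas_V_closed_form:
  fixes A :: int and B :: real
  assumes "real_of_int A ^ 2 \<ge> 4" and "B = sqrt (real_of_int A ^ 2 - 4)"
  shows "((A + B) / 2)^n + ((A - B) / 2)^n = lucas_V A n"
proof (induction n rule: induct_nat_012)
  case (ge2 n)
  define x y where "x = (A + B) / 2" and "y = (A - B) / 2"
  have "x + y = A" by (simp add: x_def y_def field_simps)
  moreover have "B^2 = A^2 - 4"
    using assms by simp
  then have "x * y = 1"
    by (simp add: x_def y_def field_simps power2_eq_square[symmetric])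
  moreover have "x^Suc (Suc n) + y^Suc (Suc n) = (x + y) * (x^Suc n + y^Suc n) - x * y * (x^n + y^n)"
    by (simp add: algebra_simps)
  ultimately show ?case using ge2 by (simp add: x_def y_def)
qed (simp_all add: field_simps)

lemma trace_2: "trace (X::'a::semiring_1^2^2) = X$1$1 + X$2$2"
  by (simp add: trace_def sum_2)

lemma trace_square_2: "trace ((X::'a::comm_ring_1^2^2) ** X) = trace X ^ 2 - 2 * det X"
  by (simp add: trace_2 det_2 mat2_mult_nth power2_eq_square algebra_simps)

lemma det_diff_mat_1_2: "det ((X::'a::comm_ring_1^2^2) - mat 1) = det X - trace X + 1"
  by (simp add: trace_2 det_2 algebra_simps)

lemma det_add_mat_1_2: "det ((X::'a::comm_ring_1^2^2) + mat 1) = det X + trace X + 1"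
  by (simp add: trace_2 det_2 algebra_simps)

lemma cat_pow_0 [simp]: "cat_pow p q 0 = mat 1"
  by (simp add: cat_pow_def)

lemma cat_pow_Suc: "cat_pow p q (Suc n) = cat_C p q ** cat_pow p q n"
  by (simp add: cat_pow_def)

lemma cat_pow_add: "cat_pow p q (m + n) = cat_pow p q m ** cat_pow p q n"
  by (induction m) (simp_all add: cat_pow_Suc matrix_mul_assoc matrix_mul_lid)

lemma cat_pow_nth:
  fixes p q :: int
  defines "U \<equiv> lucas_U (cat_A p q)"
  shows "cat_pow p q n $1$1 = U (Suc n) - (1 + p * q) * U n"
    and "cat_pow p q n $1$2 = p * U n"
    and "cat_pow p q n $2$1 = q * U n"
    and "cat_pow p q n $2$2 = U (Suc n) - U n"
proof -
  have "cat_pow p q n $1$1 = U (Suc n) - (1 + p * q) * U n \<and> cat_pow p q n $1$2 = p * U n \<and>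
        cat_pow p q n $2$1 = q * U n \<and> cat_pow p q n $2$2 = U (Suc n) - U n"
  proof (induction n)
    case (Suc n)
    have "U (Suc (Suc n)) = (p * q + 2) * U (Suc n) - U n"
      by (simp add: U_def cat_A_def)
    with Suc.IH show ?case
      by (simp (no_asm_simp) add: cat_pow_Suc mat2_mult_nth algebra_simps)
  qed (simp add: U_def)
  then show "cat_pow p q n $1$1 = U (Suc n) - (1 + p * q) * U n" "cat_pow p q n $1$2 = p * U n"
    "cat_pow p q n $2$1 = q * U n" "cat_pow p q n $2$2 = U (Suc n) - U n"
    by auto
qed

lemma det_cat_pow: "det (cat_pow p q n) = 1"
  using lucas_U_cassini[of "cat_A p q" n]
  by (simp add: det_2 cat_pow_nth cat_A_def algebra_simps power2_eq_square)

lemma trace_cat_pow: "trace (cat_pow p q n) = lucas_V (cat_A p q) n"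
  by (simp add: trace_2 cat_pow_nth lucas_V_eq_U cat_A_def algebra_simps)

lemma lucas_V_double: "lucas_V A (2 * n) = lucas_V A n ^ 2 - 2"
proof -
  \<comment> \<open>\<open>V\<^sub>n(A)\<close> is the trace of the unimodular matrix \<open>cat_pow 1 (A - 2) n\<close>\<close>
  have A: "cat_A 1 (A - 2) = A" by (simp add: cat_A_def)
  have "lucas_V A (2 * n) = trace (cat_pow 1 (A - 2) n ** cat_pow 1 (A - 2) n)"
    by (simp add: cat_pow_add[symmetric] mult_2 trace_cat_pow A)
  also have "\<dots> = lucas_V A n ^ 2 - 2"
    by (simp only: trace_square_2 trace_cat_pow det_cat_pow A)
  finally show ?thesis .
qed

lemma G_int_eq_lucas_V:
  assumes "0 \<le> p * q"
  shows "G_int p q n = lucas_V (cat_A p q) n"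
proof -
  have "cat_A p q \<ge> 2"
    using assms by (simp add: cat_A_def)
  then have "real_of_int (cat_A p q) \<ge> 2"
    by simp
  then have "real_of_int (cat_A p q) ^ 2 \<ge> 2 ^ 2"
    by (rule power_mono) simp
  then have "G_real p q n = lucas_V (cat_A p q) n"
    unfolding G_real_def cat_B_def by (intro lucas_V_closed_form) simp_all
  then show ?thesis
    unfolding G_int_def by (intro the_equality) auto
qed

section \<open>Matrices congruent to the identity\<close>

definition mat_dvd :: "'a::comm_semiring_1 \<Rightarrow> 'a^'n^'m \<Rightarrow> bool" where
  "mat_dvd m X \<longleftrightarrow> (\<forall>i j. m dvd X$i$j)"

lemma mat_dvd_2_iff:
  "mat_dvd m (X::'a::comm_semiring_1^2^2) \<longleftrightarrow> m dvd X$1$1 \<and> m dvd X$1$2 \<and> m dvd X$2$1 \<and> m dvd X$2$2"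
  by (simp add: mat_dvd_def forall_2)

lemma mat_dvd_mult:
  fixes X :: "'a::comm_semiring_1^'n^'m" and Y :: "'a^'k^'n"
  assumes "mat_dvd a X" "mat_dvd b Y"
  shows "mat_dvd (a * b) (X ** Y)"
  using assms by (auto simp: mat_dvd_def matrix_matrix_mult_def intro!: dvd_sum mult_dvd_mono)

lemma mat_dvd_mult_right:
  fixes X :: "'a::comm_semiring_1^'n^'m" and Y :: "'a^'k^'n"
  shows "mat_dvd a X \<Longrightarrow> mat_dvd a (X ** Y)"
  using mat_dvd_mult[of a X 1 Y] by (simp add: mat_dvd_def)

lemma mat_dvd_add: "mat_dvd a X \<Longrightarrow> mat_dvd a Y \<Longrightarrow> mat_dvd a (X + Y)"
  by (simp add: mat_dvd_def)

lemma mat_dvd_double: "mat_dvd (a::'a::comm_semiring_1) X \<Longrightarrow> mat_dvd (2 * a) (X + X)"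
  by (simp add: mat_dvd_def mult_2[symmetric] mult_dvd_mono)

lemma mat_dvd_trans: "a dvd b \<Longrightarrow> mat_dvd b X \<Longrightarrow> mat_dvd a X"
  by (meson dvd_trans mat_dvd_def)

lemma mat_dvd_diff_mat_1_imp_cong:
  fixes X :: "'a::comm_ring_1^'n^'n"
  assumes "mat_dvd m (X - mat 1)"
  shows "m dvd (X *v w)$i - w$i"
proof -
  have "(X *v w)$i - w$i = ((X - mat 1) *v w)$i"
    by (simp add: matrix_vector_mult_diff_rdistrib)
  then show ?thesis
    using assms by (auto simp: mat_dvd_def matrix_vector_mult_def intro!: dvd_sum)
qed

lemma mat2_mult_diff_mat_1:
  "(X::'a::comm_ring_1^2^2) ** Y - mat 1 = (X - mat 1) ** Y + (Y - mat 1)"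
  by (simp add: mat2_eq_iff mat2_mult_nth algebra_simps)

lemma mat2_square_diff_mat_1:
  "(X::'a::comm_ring_1^2^2) ** X - mat 1 = (X - mat 1) ** (X - mat 1) + ((X - mat 1) + (X - mat 1))"
  by (simp add: mat2_eq_iff mat2_mult_nth algebra_simps)

lemma mat2_square_diff_mat_1_factor:
  "(X::'a::comm_ring_1^2^2) ** X - mat 1 = (X - mat 1) ** (X + mat 1)"
  "(X::'a::comm_ring_1^2^2) ** X - mat 1 = (X + mat 1) ** (X - mat 1)"
  by (simp_all add: mat2_eq_iff mat2_mult_nth algebra_simps)

lemma mat_dvd_diff_mat_1_mult:
  fixes X Y :: "'a::comm_ring_1^2^2"
  assumes "mat_dvd m (X - mat 1)" "mat_dvd m (Y - mat 1)"
  shows "mat_dvd m (X ** Y - mat 1)"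
  unfolding mat2_mult_diff_mat_1 using assms by (intro mat_dvd_add mat_dvd_mult_right)

lemma mat_dvd_diff_mat_1_square:
  fixes X :: "'a::comm_ring_1^2^2"
  assumes "2 dvd m" "mat_dvd m (X - mat 1)"
  shows "mat_dvd (2 * m) (X ** X - mat 1)"
  unfolding mat2_square_diff_mat_1
proof (rule mat_dvd_add)
  show "mat_dvd (2 * m) ((X - mat 1) ** (X - mat 1))"
    using mat_dvd_mult[OF assms(2) assms(2)] mat_dvd_trans assms(1) by (metis mult_dvd_mono dvd_refl)
  show "mat_dvd (2 * m) ((X - mat 1) + (X - mat 1))"
    using assms(2) by (rule mat_dvd_double)
qed

lemma mat_dvd_add_mat_1:
  fixes X :: "'a::comm_ring_1^2^2"
  assumes "mat_dvd 2 (X - mat 1)"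
  shows "mat_dvd 2 (X + mat 1)"
proof -
  have "X + mat 1 = (X - mat 1) + mat 2"
    by (simp add: mat2_eq_iff mat_def)
  moreover have "mat_dvd 2 (mat 2 :: 'a^2^2)"
    by (simp add: mat_dvd_def mat_def)
  ultimately show ?thesis
    using assms by (metis mat_dvd_add)
qed

lemma T1_pos: "T1 p q \<ge> 1"
  by (simp add: T1_def)

lemma cat_pow_T1_cong_1_mod_2: "mat_dvd 2 (cat_pow p q (T1 p q) - mat 1)"
proof -
  define A where "A = p * q + 2"
  have U: "lucas_U A 2 = A" "lucas_U A 3 = A ^ 2 - 1" "lucas_U A 4 = A * (A ^ 2 - 1) - A"
    by (simp_all add: numeral_eq_Suc power2_eq_square)
  have "even A \<longleftrightarrow> even p \<or> even q"
    by (simp add: A_def)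
  then show ?thesis
    by (auto simp: T1_def mat_dvd_2_iff cat_pow_nth cat_A_def U A_def[symmetric])
qed

lemma cat_pow_mult_T1_cong_1_mod_2: "mat_dvd 2 (cat_pow p q (k * T1 p q) - mat 1)"
proof (induction k)
  case (Suc k)
  have "cat_pow p q (Suc k * T1 p q) = cat_pow p q (T1 p q) ** cat_pow p q (k * T1 p q)"
    by (simp add: cat_pow_add[symmetric])
  then show ?case
    using mat_dvd_diff_mat_1_mult[OF cat_pow_T1_cong_1_mod_2 Suc.IH] by simp
qed (simp add: mat_dvd_def)

lemma cat_pow_pow2_T1_cong_1_mod_pow2: "mat_dvd (2 ^ Suc j) (cat_pow p q (2 ^ j * T1 p q) - mat 1)"
proof (induction j)
  case 0
  show ?case using cat_pow_T1_cong_1_mod_2 by simp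
next
  case (Suc j)
  have "cat_pow p q (2 ^ Suc j * T1 p q) = cat_pow p q (2 ^ j * T1 p q) ** cat_pow p q (2 ^ j * T1 p q)"
    by (simp add: cat_pow_add[symmetric] mult_2 add_mult_distrib)
  then show ?case
    using mat_dvd_diff_mat_1_square[OF _ Suc.IH] by simp
qed

lemma point_period_cong: "vcong (2 ^ e) (cat_pow p q (point_period p q e w) *v w) w"
proof -
  have "mat_dvd (2 ^ e) (cat_pow p q (2 ^ e * T1 p q) - mat 1)"
    using cat_pow_pow2_T1_cong_1_mod_pow2 by (rule mat_dvd_trans[rotated]) simp
  then have "vcong (2 ^ e) (cat_pow p q (2 ^ e * T1 p q) *v w) w"
    by (simp add: vcong_def cong_iff_dvd_diff mat_dvd_diff_mat_1_imp_cong)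
  moreover have "2 ^ e * T1 p q \<ge> 1"
    using T1_pos[of p q] by simp
  ultimately have "\<exists>n. n \<ge> 1 \<and> vcong (2 ^ e) (cat_pow p q n *v w) w"
    by blast
  then show ?thesis
    unfolding point_period_def by (rule LeastI2_ex) simp
qed

lemma trace_cong_2_mod_4:
  fixes X :: "int^2^2"
  assumes "mat_dvd 2 (X - mat 1)" "det X = 1"
  shows "[trace X = 2] (mod 4)"
proof -
  have "2 dvd X$1$1 - 1" "2 dvd X$1$2" "2 dvd X$2$1" "2 dvd X$2$2 - 1"
    using assms(1) by (simp_all add: mat_dvd_2_iff)
  then obtain a b c d where "X$1$1 - 1 = 2 * a" "X$1$2 = 2 * b" "X$2$1 = 2 * c" "X$2$2 - 1 = 2 * d"
    by (meson dvdE)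
  then have "X$1$1 = 1 + 2 * a" "X$1$2 = 2 * b" "X$2$1 = 2 * c" "X$2$2 = 1 + 2 * d"
    by simp_all
  moreover from this have "a + d = 2 * (b * c - a * d)"
    using assms(2) by (simp add: det_2 algebra_simps)
  ultimately show ?thesis
    by (simp add: trace_2 cong_iff_dvd_diff) presburger
qed

definition T_g :: "int \<Rightarrow> int \<Rightarrow> nat" where
  "T_g p q = 2 ^ m0 p q * T1 p q"

lemma lucas_V_T1_cong_2_mod_4: "[lucas_V (cat_A p q) (T1 p q) = 2] (mod 4)"
  using trace_cong_2_mod_4[OF cat_pow_T1_cong_1_mod_2 det_cat_pow] by (simp add: trace_cat_pow)

lemma lucas_V_double_cong_2_mod_16:
  assumes "[lucas_V A n = 2] (mod 4)"
  shows "[lucas_V A (2 * n) = 2] (mod 16)"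
proof -
  obtain z where "lucas_V A n = 2 + 4 * z"
    using cong_sym[OF assms] by (auto simp: cong_iff_lin)
  then have "lucas_V A (2 * n) = (2 + 4 * z)^2 - 2"
    by (simp add: lucas_V_double)
  then have "lucas_V A (2 * n) = 2 + 16 * (z + z * z)"
    by (simp add: power2_eq_square algebra_simps)
  then show ?thesis
    by (simp add: cong_iff_dvd_diff)
qed

lemma lucas_V_T_g_cong_2_mod_8:
  assumes "0 \<le> p * q"
  shows "[lucas_V (cat_A p q) (T_g p q) = 2] (mod 8)"
proof (cases "m0 p q = 0")
  case True
  obtain z where z: "lucas_V (cat_A p q) (T1 p q) = 2 + 4 * z"
    using cong_sym[OF lucas_V_T1_cong_2_mod_4] by (auto simp: cong_iff_lin)
  have "[1 + 2 * z = 1] (mod 4)"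
    using True by (simp add: m0_def G_int_eq_lucas_V[OF assms] z split: if_splits)
  then have "even z"
    by (simp add: cong_iff_dvd_diff) presburger
  then show ?thesis
    using True by (auto simp: T_g_def z cong_iff_dvd_diff)
next
  case False
  then have "T_g p q = 2 * T1 p q"
    by (simp add: T_g_def m0_def split: if_splits)
  moreover have "[lucas_V (cat_A p q) (2 * T1 p q) = 2] (mod 16)"
    by (rule lucas_V_double_cong_2_mod_16[OF lucas_V_T1_cong_2_mod_4])
  ultimately show ?thesis
    by (simp add: cong_dvd_modulus)
qed

lemma lucas_V_pow2_T_g_cong_2_mod_8:
  assumes "0 \<le> p * q"
  shows "[lucas_V (cat_A p q) (2 ^ i * T_g p q) = 2] (mod 8)"
proof (induction i)
  case 0
  show ?case using lucas_V_T_g_cong_2_mod_8[OF assms] by simp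
next
  case (Suc i)
  have "[lucas_V (cat_A p q) (2 * (2 ^ i * T_g p q)) = 2] (mod 16)"
    using Suc.IH by (intro lucas_V_double_cong_2_mod_16) (simp add: cong_dvd_modulus)
  then show ?case
    by (simp add: cong_dvd_modulus mult.assoc)
qed

section \<open>Loss of powers of 2 under integer matrices\<close>

lemma v2_decompose:
  assumes "x \<noteq> 0"
  obtains u where "x = 2 ^ v2 x * u" "odd u"
  using multiplicity_decompose'[OF assms, of 2] unfolding v2_def by auto

lemma pow2_mult_eq_pow2_mult_odd:
  fixes x u :: int
  assumes "2 ^ m * x = 2 ^ d * u" "odd u"
  shows "m \<le> d" and "x = 2 ^ (d - m) * u"
proof -
  show "m \<le> d"
  proof (rule ccontr)
    assume "\<not> m \<le> d"
    then have "2 ^ d * (2 ^ (m - d) * x) = 2 ^ d * u"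
      using assms(1) by (simp add: mult.assoc[symmetric] power_add[symmetric])
    then have "u = 2 ^ (m - d) * x"
      by simp
    then show False
      using assms(2) \<open>\<not> m \<le> d\<close> by simp
  qed
  then have "2 ^ m * x = 2 ^ m * (2 ^ (d - m) * u)"
    using assms(1) by (simp add: mult.assoc[symmetric] power_add[symmetric])
  then show "x = 2 ^ (d - m) * u"
    by simp
qed

definition pow2_cancellable :: "int^'n^'m \<Rightarrow> nat \<Rightarrow> bool" where
  "pow2_cancellable X j \<longleftrightarrow>
     (\<forall>w k. (\<forall>i. (2::int) ^ (k + j) dvd (X *v w)$i) \<longrightarrow> (\<forall>i. (2::int) ^ k dvd w$i))"

lemma pow2_cancellable_mult:
  fixes X :: "int^'m^'k" and Y :: "int^'n^'m"
  assumes "pow2_cancellable X i" "pow2_cancellable Y j"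
  shows "pow2_cancellable (X ** Y) (i + j)"
  unfolding pow2_cancellable_def
proof (intro allI impI)
  fix w :: "int^'n" and k l
  assume "\<forall>l. (2::int) ^ (k + (i + j)) dvd ((X ** Y) *v w)$l"
  then have "\<forall>l. (2::int) ^ ((k + j) + i) dvd (X *v (Y *v w))$l"
    by (simp add: matrix_vector_mul_assoc ac_simps)
  then have "\<forall>l. (2::int) ^ (k + j) dvd (Y *v w)$l"
    using assms(1) unfolding pow2_cancellable_def by blast
  then show "(2::int) ^ k dvd w$l"
    using assms(2) unfolding pow2_cancellable_def by blast
qed

lemma pow2_cancellable_mult_right:
  fixes P :: "int^'m^'k" and X :: "int^'n^'m"
  assumes "pow2_cancellable (P ** X) j"
  shows "pow2_cancellable X j"
  unfolding pow2_cancellable_def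
proof (intro allI impI)
  fix w :: "int^'n" and k l
  assume "\<forall>l. (2::int) ^ (k + j) dvd (X *v w)$l"
  then have "\<forall>l. (2::int) ^ (k + j) dvd (P *v (X *v w))$l"
    by (auto simp: matrix_vector_mult_def[of P] intro!: dvd_sum)
  then have "\<forall>l. (2::int) ^ (k + j) dvd ((P ** X) *v w)$l"
    by (simp add: matrix_vector_mul_assoc)
  then show "(2::int) ^ k dvd w$l"
    using assms unfolding pow2_cancellable_def by blast
qed

lemma pow2_cancellable_mono:
  assumes "pow2_cancellable X j" "j \<le> j'"
  shows "pow2_cancellable X j'"
  unfolding pow2_cancellable_def
proof (intro allI impI)
  fix w k i
  assume "\<forall>l. (2::int) ^ (k + j') dvd (X *v w)$l"
  then have "\<forall>l. (2::int) ^ ((k + (j' - j)) + j) dvd (X *v w)$l"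
    using assms(2) by simp
  then have "(2::int) ^ (k + (j' - j)) dvd w$i"
    using assms(1) unfolding pow2_cancellable_def by blast
  then show "(2::int) ^ k dvd w$i"
    by (rule dvd_trans[rotated]) (simp add: le_imp_power_dvd)
qed

lemma dvd_det_mult_of_dvd_mult_vec:
  fixes Y :: "'a::comm_ring_1^2^2"
  assumes "\<forall>l. c dvd (Y *v w)$l"
  shows "c dvd det Y * w$i"
proof -
  have "det Y * w$1 = Y$2$2 * (Y *v w)$1 - Y$1$2 * (Y *v w)$2"
    "det Y * w$2 = Y$1$1 * (Y *v w)$2 - Y$2$1 * (Y *v w)$1"
    by (simp_all add: det_2 mat2_mult_vec_nth algebra_simps)
  then show ?thesis
    using assms exhaust_2[of i] by auto
qed

lemma pow2_cancellable_of_det: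
  fixes Y :: "int^2^2"
  assumes "det Y = 2 ^ d * u" "odd u"
  shows "pow2_cancellable Y d"
  unfolding pow2_cancellable_def
proof (intro allI impI)
  fix w :: "int^2" and k i
  assume "\<forall>l. (2::int) ^ (k + d) dvd (Y *v w)$l"
  then have "2 ^ d * 2 ^ k dvd 2 ^ d * (u * w$i)"
    using dvd_det_mult_of_dvd_mult_vec assms(1) by (metis mult.assoc mult.commute power_add)
  then have "2 ^ k dvd u * w$i"
    by simp
  moreover have "coprime ((2::int) ^ k) u"
    using assms(2) by simp
  ultimately show "(2::int) ^ k dvd w$i"
    using coprime_dvd_mult_right_iff by blast
qed

lemma pow2_cancellable_2x2:
  fixes X :: "int^2^2"
  assumes "mat_dvd (2 ^ a) X" "det X = 2 ^ d * u" "odd u"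
  shows "pow2_cancellable X (d - a)"
  unfolding pow2_cancellable_def
proof (intro allI impI)
  fix w :: "int^2" and k i
  assume dvd_Xw: "\<forall>l. (2::int) ^ (k + (d - a)) dvd (X *v w)$l"
  define Y where "Y = (\<chi> i j. X$i$j div 2 ^ a)"
  have X: "X$i$j = 2 ^ a * Y$i$j" for i j
    using assms(1) by (simp add: Y_def mat_dvd_def)
  have "det X = 2 ^ a * 2 ^ a * det Y"
    by (simp add: det_2 X algebra_simps)
  then have "2 ^ (2 * a) * det Y = 2 ^ d * u"
    using assms(2) by (simp add: power_add mult_2)
  then have "2 * a \<le> d" "det Y = 2 ^ (d - 2 * a) * u"
    using pow2_mult_eq_pow2_mult_odd assms(3) by blast+
  then have cancel_Y: "pow2_cancellable Y (d - 2 * a)"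
    using pow2_cancellable_of_det assms(3) by blast
  have "2 ^ a * 2 ^ (k + (d - 2 * a)) dvd 2 ^ a * (Y *v w)$l" for l
    using dvd_Xw \<open>2 * a \<le> d\<close>
    by (simp add: mat2_mult_vec_nth X algebra_simps flip: power_add)
  then have "(2::int) ^ (k + (d - 2 * a)) dvd (Y *v w)$l" for l
    by simp
  then show "(2::int) ^ k dvd w$i"
    using cancel_Y unfolding pow2_cancellable_def by blast
qed

lemma pow2_cancellable_diff_mat_1_unimodular:
  fixes X :: "int^2^2"
  assumes "mat_dvd 2 (X - mat 1)" "det X = 1" "trace X \<noteq> 2"
  shows "pow2_cancellable (X - mat 1) (v2 (trace X div 2 - 1))"
proof -
  define x where "x = trace X div 2 - 1"
  obtain k where "trace X = 2 + 4 * k"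
    using cong_sym[OF trace_cong_2_mod_4[OF assms(1,2)]] by (auto simp: cong_iff_lin)
  then have "trace X = 2 + 2 * x"
    by (simp add: x_def)
  then have "x \<noteq> 0"
    using assms(3) by auto
  then obtain u where u: "x = 2 ^ v2 x * u" "odd u"
    by (rule v2_decompose)
  have "det (X - mat 1) = - 2 * x"
    using assms(2) \<open>trace X = 2 + 2 * x\<close> by (simp add: det_diff_mat_1_2)
  also have "\<dots> = 2 ^ (v2 x + 1) * (- u)"
    by (subst (1) u(1)) simp
  finally have "det (X - mat 1) = 2 ^ (v2 x + 1) * (- u)" .
  then have "pow2_cancellable (X - mat 1) (v2 x + 1 - 1)"
    using pow2_cancellable_2x2[of 1 "X - mat 1" "v2 x + 1" "- u"] assms(1) u(2) by simp
  then show ?thesis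
    by (simp add: x_def)
qed

lemma pow2_cancellable_add_mat_1_unimodular:
  fixes X :: "int^2^2"
  assumes "mat_dvd 2 (X - mat 1)" "det X = 1" "[trace X = 2] (mod 8)"
  shows "pow2_cancellable (X + mat 1) 1"
proof -
  obtain z where "trace X = 2 + 8 * z"
    using cong_sym[OF assms(3)] by (auto simp: cong_iff_lin)
  then have "det (X + mat 1) = 2 ^ 2 * (1 + 2 * z)"
    using assms(2) by (simp add: det_add_mat_1_2)
  then have "pow2_cancellable (X + mat 1) (2 - 1)"
    using pow2_cancellable_2x2[of 1 "X + mat 1" 2 "1 + 2 * z"] mat_dvd_add_mat_1[OF assms(1)] by simp
  then show ?thesis
    by simp
qed

lemma cat_pow_pow2_T_g_cong_1_mod_2: "mat_dvd 2 (cat_pow p q (2 ^ i * T_g p q) - mat 1)"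
  using cat_pow_mult_T1_cong_1_mod_2[of p q "2 ^ i * 2 ^ m0 p q"] by (simp add: T_g_def mult.assoc)

lemma pow2_cancellable_cat_pow_T_g:
  assumes "0 < p * q"
  shows "pow2_cancellable (cat_pow p q (T_g p q) - mat 1) (e_sg p q)"
proof -
  have "cat_A p q \<ge> 3" "T_g p q \<ge> 1"
    using assms T1_pos[of p q] by (simp_all add: cat_A_def T_g_def)
  then have "trace (cat_pow p q (T_g p q)) \<noteq> 2"
    using lucas_V_gt_2[of "cat_A p q" "T_g p q"] by (simp add: trace_cat_pow)
  then show ?thesis
    using pow2_cancellable_diff_mat_1_unimodular[OF cat_pow_pow2_T_g_cong_1_mod_2[where i = 0] det_cat_pow] assms
    by (simp add: e_sg_def T_g_def G_int_eq_lucas_V trace_cat_pow)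
qed

lemma pow2_cancellable_cat_pow_pow2_T_g:
  assumes "0 < p * q"
  shows "pow2_cancellable (cat_pow p q (2 ^ i * T_g p q) - mat 1) (e_sg p q + i)"
proof (induction i)
  case 0
  show ?case using pow2_cancellable_cat_pow_T_g[OF assms] by simp
next
  case (Suc i)
  define X where "X = cat_pow p q (2 ^ i * T_g p q)"
  have "cat_pow p q (2 ^ Suc i * T_g p q) - mat 1 = (X - mat 1) ** (X + mat 1)"
    by (simp add: X_def mult_2 add_mult_distrib cat_pow_add mat2_square_diff_mat_1_factor)
  moreover have "pow2_cancellable (X + mat 1) 1"
    using assms lucas_V_pow2_T_g_cong_2_mod_8[of p q i]
    by (intro pow2_cancellable_add_mat_1_unimodular)
      (simp_all add: X_def cat_pow_pow2_T_g_cong_1_mod_2 det_cat_pow trace_cat_pow)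
  then have "pow2_cancellable ((X - mat 1) ** (X + mat 1)) (e_sg p q + i + 1)"
    using Suc.IH[folded X_def] by (intro pow2_cancellable_mult)
  ultimately show ?case
    by simp
qed

lemma pow2_cancellable_cat_pow_pow2_T1:
  assumes "0 < p * q"
  shows "pow2_cancellable (cat_pow p q (2 ^ l * T1 p q) - mat 1) (e_sg p q + l)"
proof (cases "m0 p q \<le> l")
  case True
  then have "2 ^ l * T1 p q = 2 ^ (l - m0 p q) * T_g p q"
    by (simp add: T_g_def mult.assoc power_add[symmetric])
  then show ?thesis
    using pow2_cancellable_cat_pow_pow2_T_g[OF assms, of "l - m0 p q"]
    by (auto intro: pow2_cancellable_mono)
next
  case False
  then have "l = 0" "T_g p q = T1 p q + T1 p q"
    by (auto simp: T_g_def m0_def split: if_splits)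
  then have "cat_pow p q (T_g p q) - mat 1
      = (cat_pow p q (T1 p q) + mat 1) ** (cat_pow p q (T1 p q) - mat 1)"
    by (simp add: cat_pow_add mat2_square_diff_mat_1_factor(2))
  then have "pow2_cancellable (cat_pow p q (T1 p q) - mat 1) (e_sg p q)"
    using pow2_cancellable_cat_pow_T_g[OF assms] by (metis pow2_cancellable_mult_right)
  then show ?thesis
    using \<open>l = 0\<close> by simp
qed

lemma pow2_cancellable_cat_C:
  assumes "p \<noteq> 0" "q \<noteq> 0"
  shows "pow2_cancellable (cat_pow p q 1 - mat 1) (max (v2 p) (v2 q))"
proof -
  obtain u where u: "p = 2 ^ v2 p * u" "odd u"
    using v2_decompose[OF assms(1)] .
  obtain u' where u': "q = 2 ^ v2 q * u'" "odd u'"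
    using v2_decompose[OF assms(2)] .
  have "(2::int) ^ min (v2 p) (v2 q) dvd p" "(2::int) ^ min (v2 p) (v2 q) dvd q"
    by (subst u(1) u'(1); simp add: le_imp_power_dvd)+
  then have "mat_dvd (2 ^ min (v2 p) (v2 q)) (cat_pow p q 1 - mat 1)"
    by (simp add: cat_pow_def mat_dvd_2_iff)
  moreover have "det (cat_pow p q 1 - mat 1) = 2 ^ (v2 p + v2 q) * (- (u * u'))"
    by (simp add: cat_pow_def det_2) (subst u(1), subst u'(1), simp add: power_add algebra_simps)
  moreover have "odd (- (u * u'))"
    using u(2) u'(2) by simp
  ultimately have "pow2_cancellable (cat_pow p q 1 - mat 1) (v2 p + v2 q - min (v2 p) (v2 q))"
    by (rule pow2_cancellable_2x2)
  moreover have "v2 p + v2 q - min (v2 p) (v2 q) = max (v2 p) (v2 q)"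
    by simp
  ultimately show ?thesis
    by metis
qed

section \<open>Scaling by powers of 2\<close>

lemma cong_mult_left_iff:
  fixes a b c m :: int
  assumes "c \<noteq> 0"
  shows "[c * a = c * b] (mod c * m) \<longleftrightarrow> [a = b] (mod m)"
  using assms by (simp add: cong_iff_dvd_diff flip: right_diff_distrib)

lemma vcong_smult_iff: "c \<noteq> 0 \<Longrightarrow> vcong (c * m) (c *s u) (c *s v) \<longleftrightarrow> vcong m u v"
  by (simp add: vcong_def cong_mult_left_iff)

lemma point_period_smult_pow2: "point_period p q (e + l) (2 ^ l *s v) = point_period p q e v"
  by (simp add: point_period_def matrix_vector_mult_smult power_add mult.commute[of "2 ^ e"]
      vcong_smult_iff)

lemma cat_map_smult_pow2: "cat_map p q (e + l) (2 ^ l *s v) = 2 ^ l *s cat_map p q e v"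
  by (simp add: cat_map_def vec_eq_iff matrix_vector_mult_smult power_add mult.commute[of "2 ^ e"]
      mod_mult_mult1)

lemma cat_orbit_smult_pow2: "cat_orbit p q (e + l) (2 ^ l *s v) = (*s) (2 ^ l) ` cat_orbit p q e v"
proof -
  have "(cat_map p q (e + l) ^^ k) (2 ^ l *s v) = 2 ^ l *s (cat_map p q e ^^ k) v" for k
    by (induction k) (simp_all add: cat_map_smult_pow2)
  then show ?thesis
    unfolding cat_orbit_def by auto
qed

lemma cat_points_pow2_multiples:
  "{w \<in> cat_points (e + l). \<forall>i. (2::int) ^ l dvd w$i} = (*s) (2 ^ l) ` cat_points e"
proof (intro equalityI subsetI)
  fix w assume "w \<in> {w \<in> cat_points (e + l). \<forall>i. (2::int) ^ l dvd w$i}"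
  then have w: "w \<in> cat_points (e + l)" and "\<forall>i. (2::int) ^ l dvd w$i"
    by auto
  then have wv: "w = 2 ^ l *s (\<chi> i. w$i div 2 ^ l)"
    by (simp add: vec_eq_iff)
  moreover have "(\<chi> i. w$i div 2 ^ l) \<in> cat_points e"
    using w by (subst (asm) wv) (simp add: cat_points_def power_add zero_le_mult_iff)
  ultimately show "w \<in> (*s) (2 ^ l) ` cat_points e"
    by blast
qed (auto simp: cat_points_def power_add)

lemma pow2_dvd_of_point_period:
  assumes "pow2_cancellable (cat_pow p q T - mat 1) J" "J \<le> e"
    and "point_period p q (e + l) w = T"
  shows "(2::int) ^ l dvd w$i"
proof -
  have "(2::int) ^ ((e - J + l) + J) dvd ((cat_pow p q T - mat 1) *v w)$i'" for i'
    using point_period_cong[of "e + l" p q w] assms(2,3)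
    by (simp add: vcong_def cong_iff_dvd_diff matrix_vector_mult_diff_rdistrib)
  then have "(2::int) ^ (e - J + l) dvd w$i"
    using assms(1) unfolding pow2_cancellable_def by blast
  then show ?thesis
    by (rule dvd_trans[rotated]) (simp add: le_imp_power_dvd)
qed

lemma N_cyc_pow2_stable:
  assumes "pow2_cancellable (cat_pow p q T - mat 1) J" "J \<le> e"
  shows "N_cyc p q T (e + l) = N_cyc p q T e"
proof -
  define cycles where
    "cycles E = {cat_orbit p q E v | v. v \<in> cat_points E \<and> point_period p q E v = T}" for E
  have "cycles (e + l) = {cat_orbit p q (e + l) w | w.
      w \<in> {w \<in> cat_points (e + l). \<forall>i. (2::int) ^ l dvd w$i} \<and> point_period p q (e + l) w = T}"
    using pow2_dvd_of_point_period[OF assms] by (auto simp: cycles_def)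
  also have "\<dots> = {cat_orbit p q (e + l) (2 ^ l *s v) | v.
      v \<in> cat_points e \<and> point_period p q (e + l) (2 ^ l *s v) = T}"
    unfolding cat_points_pow2_multiples by blast
  also have "\<dots> = (\<lambda>X. (*s) (2 ^ l) ` X) ` cycles e"
    by (auto simp: cycles_def cat_orbit_smult_pow2 point_period_smult_pow2)
  finally have "cycles (e + l) = (\<lambda>X. (*s) (2 ^ l) ` X) ` cycles e" .
  moreover have "inj ((*s) (2 ^ l :: int) :: int^2 \<Rightarrow> int^2)"
    by (rule injI) (simp add: vec_eq_iff)
  then have "inj_on (\<lambda>X. (*s) (2 ^ l) ` X) (cycles e)"
    by (auto simp: inj_on_def inj_image_eq_iff)
  ultimately show ?thesis
    by (simp add: N_cyc_def cycles_def[symmetric] card_image)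
qed

theorem theorem4:
  fixes p q :: int and Tc lc s e :: nat
  assumes hp: "p > 0" and hq: "q > 0"
    and hTc_pos: "Tc > 0"
    and hTc: "Tc = 2 ^ lc * T1 p q \<or> Tc = 1"
    and hs: "T_per p q (nat (e_s p q)) = 2 ^ s * T1 p q"
    and he_pos: "e > 0"
    and he: "int e \<ge>
      (if Tc = 1 then int (max (v2 p) (v2 q))
       else if lc = 0 \<and> T1 p q \<noteq> 1 then int (e_sg p q) + 1
       else if 1 \<le> lc \<and> lc \<le> s + 1 then int (e_sg p q) + 2 * int lc - 1
       else int (e_sg p q) + int s + 1 + int lc)"
  shows "\<forall>l::nat. l > 0 \<longrightarrow> N_cyc p q Tc e = N_cyc p q Tc (e + l)"
proof -
  have "0 < p * q"
    using hp hq by simp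
  obtain J where "pow2_cancellable (cat_pow p q Tc - mat 1) J" "J \<le> e"
  proof (cases "Tc = 1")
    case True
    then show ?thesis
      using that pow2_cancellable_cat_C[of p q] hp hq he by simp
  next
    case False
    \<comment> \<open>every branch of \<open>he\<close> bounds \<open>e\<close> below by \<open>e_sg p q + lc\<close>; \<open>hs\<close> only selects the branch\<close>
    then have "e_sg p q + lc \<le> e"
      using he by (auto split: if_splits)
    then show ?thesis
      using that pow2_cancellable_cat_pow_pow2_T1[OF \<open>0 < p * q\<close>, of lc] hTc False by blast
  qed
  then show ?thesis
    using N_cyc_pow2_stable by metis
qed

end
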